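(* Let $\mathcal{H}$ be a complex Hilbert space and let $A\in\mathcal{B}(\mathcal{H})$ be a positive operator with $\dim R(A)\ge 2$. Let $T,S\in\mathcal{B}_A(\mathcal{H})$ and $q\in\mathbb{C}$ with $0<|q|\le 1$. Then \[ |q|^2\,w_{q,A}(TS)\le 4\,w_{q,A}(T)\,w_{q,A}(S). \]
   Context: $A$ induces the semi-inner product $\langle x,y\rangle_A=\langle Ax,y\rangle$ and seminorm $\|x\|_A=\sqrt{\langle x,x\rangle_A}$. $\mathcal{B}_A(\mathcal{H})$ is the set of operators $T$ admitting an $A$-adjoint, i.e. an operator $W$ with $\langle Tx,y\rangle_A=\langle x,Wy\rangle_A$ for all $x,y$. The $A$-$q$-numerical radius is $w_{q,A}(T)=\sup\{|\langle Tx,y\rangle_A| : \|x\|_A=\|y\|_A=1,\ \langle x,y\rangle_A=q\}$. *)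

theory Defs
  imports "HOL-Analysis.Analysis"
begin

class complex_inner = real_normed_vector +
  fixes scaleC :: "complex \<Rightarrow> 'a \<Rightarrow> 'a"
    and cinner :: "'a \<Rightarrow> 'a \<Rightarrow> complex"
  assumes scaleC_add_right: "scaleC a (x + y) = scaleC a x + scaleC a y"
    and scaleC_add_left: "scaleC (a + b) x = scaleC a x + scaleC b x"
    and scaleC_scaleC: "scaleC a (scaleC b x) = scaleC (a * b) x"
    and scaleC_one: "scaleC 1 x = x"
    and scaleR_scaleC: "scaleR r x = scaleC (complex_of_real r) x"
    and cinner_add_left: "cinner (x + y) z = cinner x z + cinner y z"
    and cinner_scaleC_left: "cinner (scaleC c x) y = c * cinner x y"
    and cinner_commute: "cinner y x = cnj (cinner x y)"
    and cinner_self_nonneg: "0 \<le> Re (cinner x x)"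
    and cinner_self_eq_zero: "cinner x x = 0 \<longleftrightarrow> x = 0"
    and norm_eq_sqrt_cinner: "norm x = sqrt (Re (cinner x x))"

class chilbert_space = complex_inner + complete_space

definition clinear_op :: "('a::complex_inner \<Rightarrow> 'a) \<Rightarrow> bool" where
  "clinear_op T \<longleftrightarrow> (\<forall>x y. T (x + y) = T x + T y) \<and> (\<forall>c x. T (scaleC c x) = scaleC c (T x))"

definition bounded_op :: "('a::complex_inner \<Rightarrow> 'a) \<Rightarrow> bool" where
  "bounded_op T \<longleftrightarrow> clinear_op T \<and> (\<exists>K. \<forall>x. norm (T x) \<le> norm x * K)"

definition positive_op :: "('a::complex_inner \<Rightarrow> 'a) \<Rightarrow> bool" where
  "positive_op A \<longleftrightarrow> bounded_op A \<and> (\<forall>x. Im (cinner (A x) x) = 0 \<and> 0 \<le> Re (cinner (A x) x))"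

text \<open>dim R(A) \<ge> 2: the range contains two linearly independent vectors.\<close>
definition range_dim_ge_2 :: "('a::complex_inner \<Rightarrow> 'a) \<Rightarrow> bool" where
  "range_dim_ge_2 A \<longleftrightarrow> (\<exists>u\<in>range A. \<exists>v\<in>range A.
      \<forall>a b. scaleC a u + scaleC b v = 0 \<longrightarrow> a = 0 \<and> b = 0)"

definition A_inner :: "('a::complex_inner \<Rightarrow> 'a) \<Rightarrow> 'a \<Rightarrow> 'a \<Rightarrow> complex" where
  "A_inner A x y = cinner (A x) y"

definition A_norm :: "('a::complex_inner \<Rightarrow> 'a) \<Rightarrow> 'a \<Rightarrow> real" where
  "A_norm A x = sqrt (Re (A_inner A x x))"

definition has_A_adjoint :: "('a::complex_inner \<Rightarrow> 'a) \<Rightarrow> ('a \<Rightarrow> 'a) \<Rightarrow> bool" where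
  "has_A_adjoint A T \<longleftrightarrow> bounded_op T \<and>
     (\<exists>W. bounded_op W \<and> (\<forall>x y. A_inner A (T x) y = A_inner A x (W y)))"

definition A_q_numrad :: "('a::complex_inner \<Rightarrow> 'a) \<Rightarrow> complex \<Rightarrow> ('a \<Rightarrow> 'a) \<Rightarrow> real" where
  "A_q_numrad A q T = Sup {cmod (A_inner A (T x) y) | x y.
      A_norm A x = 1 \<and> A_norm A y = 1 \<and> A_inner A x y = q}"

end

theory Submission
  imports Defs
begin

text \<open>If \<open>u\<close> and \<open>z\<close> are \<open>A\<close>-unit vectors with \<open>z \<bottom>\<^sub>A u\<close> (this needs \<open>dim R(A) \<ge> 2\<close>),
  both \<open>y = q\<^sup>* u \<plusminus> \<surd>(1 - \<bar>q\<bar>\<^sup>2) z\<close> are \<open>A\<close>-unit with \<open>\<langle>u, y\<rangle>\<^sub>A = q\<close>; averaging the two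
  values \<open>\<langle>T u, y\<rangle>\<^sub>A\<close> cancels \<open>\<langle>T u, z\<rangle>\<^sub>A\<close> and gives \<open>\<bar>q\<bar> \<bar>\<langle>T u, u\<rangle>\<^sub>A\<bar> \<le> w\<^sub>q\<^sub>,\<^sub>A(T)\<close>.
  Polarization and rescaling turn this into
  \<open>\<bar>q\<bar> \<bar>\<langle>T u, v\<rangle>\<^sub>A\<bar> \<le> 2 w\<^sub>q\<^sub>,\<^sub>A(T) \<parallel>u\<parallel>\<^sub>A \<parallel>v\<parallel>\<^sub>A\<close>. For \<open>S\<close> and \<open>v = S u\<close> this yields
  \<open>\<bar>q\<bar> \<parallel>S u\<parallel>\<^sub>A \<le> 2 w\<^sub>q\<^sub>,\<^sub>A(S) \<parallel>u\<parallel>\<^sub>A\<close>, and for \<open>T\<close> and \<open>u = S x\<close> it then gives the theorem.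
  The \<open>A\<close>-adjoints serve only to make \<open>T\<close> and \<open>S\<close> \<open>A\<close>-bounded, so that the suprema
  defining the radii are finite.\<close>

lemma cinner_add_right: "cinner x (y + z) = cinner x y + cinner x z"
  by (metis cinner_add_left cinner_commute complex_cnj_add)

lemma cinner_scaleC_right: "cinner x (scaleC c y) = cnj c * cinner x y"
  by (metis cinner_scaleC_left cinner_commute complex_cnj_mult)

lemma cinner_zero_left: "cinner 0 y = 0"
  using cinner_add_left[of 0 0 y] by simp

lemma scaleC_zero_left: "scaleC 0 (x::'a::complex_inner) = 0"
  using scaleC_add_left[of 0 0 x] by simp

lemma cinner_zero_right: "cinner x 0 = 0"
  using cinner_scaleC_right[of x 0 0] by (simp add: scaleC_zero_left)

lemma scaleC_zero_right: "scaleC c (0::'a::complex_inner) = 0"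
  using scaleC_add_right[of c "0::'a" 0] by simp

lemma scaleC_minus_one_left: "scaleC (-1) (x::'a::complex_inner) = - x"
  using scaleR_scaleC[of "-1" x] by simp

lemma le_mult_if_quadratic_nonneg:
  fixes a b p :: real
  assumes quadratic: "\<And>t. t \<ge> 0 \<Longrightarrow> 0 \<le> a - 2 * t * p + t^2 * p * b" and "p \<ge> 0" "b \<ge> 0"
  shows "p \<le> a * b"
proof (cases "b > 0")
  case True
  have "0 \<le> a - 2 * (1/b) * p + (1/b)^2 * p * b" using quadratic[of "1/b"] True by simp
  also have "\<dots> = a - p/b" using True by (simp add: field_simps power2_eq_square)
  finally show ?thesis using True by (simp add: field_simps)
next
  case False
  hence b0: "b = 0" using assms by simp
  have a0: "0 \<le> a" using quadratic[of 0] by simp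
  show ?thesis
  proof (rule ccontr)
    assume "\<not> p \<le> a * b"
    hence p0: "p > 0" using b0 by simp
    have "0 \<le> a - 2 * ((a + 1) / (2 * p)) * p" using quadratic[of "(a + 1) / (2 * p)"] b0 p0 a0 by simp
    also have "\<dots> = -1" using p0 by (simp add: field_simps)
    finally show False by simp
  qed
qed

lemma hermitian_form_Cauchy_Schwarz:
  fixes B :: "'a::complex_inner \<Rightarrow> 'a \<Rightarrow> complex"
  assumes add: "\<And>x y z. B (x + y) z = B x z + B y z"
    and scale: "\<And>c x y. B (scaleC c x) y = c * B x y"
    and hermitian: "\<And>x y. B y x = cnj (B x y)"
    and nonneg: "\<And>x. 0 \<le> Re (B x x)"
  shows "(cmod (B x y))^2 \<le> Re (B x x) * Re (B y y)"
proof -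
  have add_right: "B x (y + z) = B x y + B x z" for x y z
    by (metis add hermitian complex_cnj_add)
  have scale_right: "B x (scaleC c y) = cnj c * B x y" for x y c
    by (metis scale hermitian complex_cnj_mult)
  have real_diag: "B x x = complex_of_real (Re (B x x))" for x
    using arg_cong[OF hermitian[of x x], of Im] by (simp add: complex_eq_iff)
  define p where "p = B x y"
  have expand: "B (x + scaleC c y) (x + scaleC c y)
      = B x x + cnj c * p + c * cnj p + c * cnj c * B y y" for c
    unfolding p_def using add scale add_right scale_right hermitian[of x y] by (simp add: algebra_simps)
  show ?thesis
  proof (rule le_mult_if_quadratic_nonneg)
    fix t :: real
    have p_cnj: "p * cnj p = of_real ((cmod p)^2)" using complex_norm_square[of p] by simp
    have "B (x + scaleC (- of_real t * p) y) (x + scaleC (- of_real t * p) y)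
        = B x x - 2 * of_real t * (p * cnj p) + (of_real t)^2 * (p * cnj p) * B y y"
      unfolding expand by (simp add: algebra_simps power2_eq_square)
    also have "\<dots> = of_real (Re (B x x) - 2 * t * (cmod p)^2 + t^2 * (cmod p)^2 * Re (B y y))"
      by (subst real_diag[of x], subst real_diag[of y], simp only: p_cnj, simp)
    finally show "0 \<le> Re (B x x) - 2 * t * (cmod (B x y))^2 + t^2 * (cmod (B x y))^2 * Re (B y y)"
      using nonneg[of "x + scaleC (- of_real t * p) y"] by (simp add: p_def)
  qed (auto simp: nonneg)
qed

lemma cinner_Cauchy_Schwarz: "cmod (cinner x y) \<le> norm x * norm y"
proof -
  have "(cmod (cinner x y))^2 \<le> Re (cinner x x) * Re (cinner y y)"
    by (rule hermitian_form_Cauchy_Schwarz)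
      (rule cinner_add_left, rule cinner_scaleC_left, rule cinner_commute, rule cinner_self_nonneg)
  also have "\<dots> = (norm x * norm y)^2"
    by (simp add: norm_eq_sqrt_cinner power_mult_distrib cinner_self_nonneg)
  finally show ?thesis by (rule power2_le_imp_le) simp
qed

lemma log_convex_seq_ratio_mono:
  fixes b :: "nat \<Rightarrow> real"
  assumes nonneg: "\<And>k. b k \<ge> 0" and log_convex: "\<And>k. (b (Suc k))^2 \<le> b k * b (Suc (Suc k))"
  shows "b k * b 1 \<le> b (Suc k) * b 0"
proof (induction k)
  case 0
  then show ?case by simp
next
  case (Suc k)
  show ?case
  proof (cases "b k = 0")
    case True
    hence "(b (Suc k))^2 \<le> 0" using log_convex[of k] by simp
    hence "b (Suc k) = 0" by simp
    thus ?thesis using nonneg[of "Suc (Suc k)"] nonneg[of 0] by simp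
  next
    case False
    hence bk: "b k > 0" using nonneg[of k] by simp
    have "b k * (b (Suc k) * b 1) \<le> b (Suc k) * (b (Suc k) * b 0)"
      using mult_left_mono[OF Suc.IH nonneg[of "Suc k"]] by (simp add: algebra_simps)
    also have "\<dots> = (b (Suc k))^2 * b 0" by (simp add: power2_eq_square)
    also have "\<dots> \<le> b k * b (Suc (Suc k)) * b 0" using mult_right_mono[OF log_convex[of k] nonneg[of 0]] .
    finally have "b k * (b (Suc k) * b 1) \<le> b k * (b (Suc (Suc k)) * b 0)" by (simp add: algebra_simps)
    thus ?thesis using bk by simp
  qed
qed

lemma log_convex_seq_power_le:
  fixes b :: "nat \<Rightarrow> real"
  assumes nonneg: "\<And>k. b k \<ge> 0" and log_convex: "\<And>k. (b (Suc k))^2 \<le> b k * b (Suc (Suc k))"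
  shows "(b 1)^n * b 0 \<le> (b 0)^n * b n"
proof (induction n)
  case 0
  then show ?case by simp
next
  case (Suc n)
  have "(b 1)^(Suc n) * b 0 = b 1 * ((b 1)^n * b 0)" by simp
  also have "\<dots> \<le> b 1 * ((b 0)^n * b n)" using mult_left_mono[OF Suc.IH nonneg[of 1]] .
  also have "\<dots> = (b 0)^n * (b n * b 1)" by (simp add: algebra_simps)
  also have "\<dots> \<le> (b 0)^n * (b (Suc n) * b 0)"
    using mult_left_mono[OF log_convex_seq_ratio_mono[of b, OF nonneg log_convex, of n]] nonneg[of 0] by simp
  also have "\<dots> = (b 0)^(Suc n) * b (Suc n)" by (simp add: algebra_simps)
  finally show ?case .
qed

lemma log_convex_seq_ratio_le_growth:
  fixes b :: "nat \<Rightarrow> real"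
  assumes nonneg: "\<And>k. b k \<ge> 0" and log_convex: "\<And>k. (b (Suc k))^2 \<le> b k * b (Suc (Suc k))"
    and growth: "\<And>n. b n \<le> C * M^n" and M: "M > 0"
  shows "b 1 \<le> M * b 0"
proof (cases "b 0 = 0")
  case True
  hence "(b 1)^2 \<le> 0" using log_convex[of 0] by simp
  thus ?thesis using True by simp
next
  case False
  hence b0: "b 0 > 0" using nonneg[of 0] by simp
  show ?thesis
  proof (rule ccontr)
    assume "\<not> b 1 \<le> M * b 0"
    define r where "r = b 1 / (M * b 0)"
    have r: "r > 1" using \<open>\<not> b 1 \<le> M * b 0\<close> b0 M by (simp add: r_def)
    obtain n where n: "C / b 0 < r^n" using real_arch_pow[OF r] by blast
    have "(b 1)^n = r^n * M^n * (b 0)^n" using b0 M by (simp add: r_def power_mult_distrib power_divide)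
    hence "r^n * M^n * (b 0)^n * b 0 \<le> (b 0)^n * b n"
      using log_convex_seq_power_le[of b, OF nonneg log_convex, of n] by simp
    also have "\<dots> \<le> (b 0)^n * (C * M^n)" using mult_left_mono[OF growth[of n], of "(b 0)^n"] b0 by simp
    finally have "(M^n * (b 0)^n) * (r^n * b 0) \<le> (M^n * (b 0)^n) * C" by (simp add: algebra_simps)
    hence "r^n * b 0 \<le> C" using M b0 by simp
    thus False using n b0 by (simp add: field_simps)
  qed
qed

lemma clinear_op_add: "clinear_op T \<Longrightarrow> T (x + y) = T x + T y"
  unfolding clinear_op_def by blast

lemma clinear_op_scaleC: "clinear_op T \<Longrightarrow> T (scaleC c x) = scaleC c (T x)"
  unfolding clinear_op_def by blast

lemma clinear_op_diff: "clinear_op T \<Longrightarrow> T (x - y) = T x - T y"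
  using clinear_op_add[of T x "- y"] clinear_op_scaleC[of T "-1" y] by (simp add: scaleC_minus_one_left)

lemma bounded_op_clinear: "bounded_op T \<Longrightarrow> clinear_op T"
  unfolding bounded_op_def by blast

lemma bounded_op_norm_le:
  assumes "bounded_op T"
  shows "\<exists>M>0. \<forall>x. norm (T x) \<le> M * norm x"
proof -
  obtain K where K: "\<And>x. norm (T x) \<le> norm x * K" using assms unfolding bounded_op_def by blast
  have "norm (T x) \<le> max 1 K * norm x" for x
    using K[of x] mult_left_mono[of K "max 1 K" "norm x"] by (simp add: mult.commute)
  thus ?thesis by (intro exI[of _ "max 1 K"]) auto
qed

lemma positive_op_selfadjoint:
  assumes "positive_op A"
  shows "cinner (A x) y = cinner x (A y)"
proof -
  have lin: "clinear_op A" using assms unfolding positive_op_def bounded_op_def by blast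
  have real: "Im (cinner (A z) z) = 0" for z using assms positive_op_def by blast
  define a where "a = cinner (A x) y"
  define b where "b = cinner (A y) x"
  have expand: "cinner (A (x + z)) (x + z)
      = cinner (A x) x + cinner (A x) z + cinner (A z) x + cinner (A z) z" for z
    using clinear_op_add[OF lin] by (simp add: cinner_add_left cinner_add_right)
  have "Im (a + b) = 0" using real[of "x + y"] expand[of y] real[of x] real[of y] by (simp add: a_def b_def)
  moreover have "Im (- \<i> * a + \<i> * b) = 0"
    using real[of "x + scaleC \<i> y"] expand[of "scaleC \<i> y"] real[of x] real[of "scaleC \<i> y"]
    by (simp add: a_def b_def clinear_op_scaleC[OF lin] cinner_scaleC_left cinner_scaleC_right)
  ultimately have "a = cnj b" by (simp add: complex_eq_iff)
  thus ?thesis by (simp add: a_def b_def cinner_commute[of x "A y"])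
qed

lemma range_dim_ge_2_non_multiple:
  assumes "range_dim_ge_2 A"
  shows "\<exists>x. \<forall>c. A x \<noteq> scaleC c p"
proof -
  obtain a b where indep: "\<And>c d. scaleC c (A a) + scaleC d (A b) = 0 \<Longrightarrow> c = 0 \<and> d = 0"
    using assms unfolding range_dim_ge_2_def by blast
  have Aa: "A a \<noteq> 0" using indep[of 1 0] by (auto simp: scaleC_zero_left scaleC_zero_right scaleC_one)
  show ?thesis
  proof (rule ccontr)
    assume "\<not> ?thesis"
    then obtain ca cb where ca: "A a = scaleC ca p" and cb: "A b = scaleC cb p" by blast
    have "scaleC cb (A a) + scaleC (- ca) (A b) = scaleC (cb * ca) p + scaleC (- (ca * cb)) p"
      by (simp add: ca cb scaleC_scaleC)
    also have "\<dots> = 0"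
      using scaleC_add_left[of "cb * ca" "- (ca * cb)" p] by (simp add: mult.commute scaleC_zero_left)
    finally have "cb = 0 \<and> ca = 0" using indep by fastforce
    thus False using Aa ca by (simp add: scaleC_zero_left)
  qed
qed

locale A_positive =
  fixes A :: "'a::complex_inner \<Rightarrow> 'a"
  assumes positive: "positive_op A"
begin

lemma clinear: "clinear_op A"
  using positive unfolding positive_op_def bounded_op_def by blast

lemma A_inner_add_left: "A_inner A (x + y) z = A_inner A x z + A_inner A y z"
  by (simp add: A_inner_def clinear_op_add[OF clinear] cinner_add_left)

lemma A_inner_add_right: "A_inner A x (y + z) = A_inner A x y + A_inner A x z"
  by (simp add: A_inner_def cinner_add_right)

lemma A_inner_scaleC_left: "A_inner A (scaleC c x) y = c * A_inner A x y"
  by (simp add: A_inner_def clinear_op_scaleC[OF clinear] cinner_scaleC_left)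

lemma A_inner_scaleC_right: "A_inner A x (scaleC c y) = cnj c * A_inner A x y"
  by (simp add: A_inner_def cinner_scaleC_right)

lemma A_inner_diff_left: "A_inner A (x - y) z = A_inner A x z - A_inner A y z"
  using A_inner_add_left[of x "- y" z] A_inner_scaleC_left[of "-1" y z] by (simp add: scaleC_minus_one_left)

lemma A_inner_commute: "A_inner A y x = cnj (A_inner A x y)"
  by (simp add: A_inner_def positive_op_selfadjoint[OF positive] cinner_commute[of x "A y"])

lemma A_inner_self_nonneg: "0 \<le> Re (A_inner A x x)"
  using positive unfolding positive_op_def A_inner_def by blast

lemma A_norm_nonneg: "0 \<le> A_norm A x"
  unfolding A_norm_def using A_inner_self_nonneg by simp

lemma A_norm_square: "(A_norm A x)^2 = Re (A_inner A x x)"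
  unfolding A_norm_def using A_inner_self_nonneg by simp

lemma A_inner_self_eq: "A_inner A x x = of_real ((A_norm A x)^2)"
  using A_norm_square[of x] positive by (simp add: complex_eq_iff positive_op_def A_inner_def)

lemma A_inner_Cauchy_Schwarz: "cmod (A_inner A x y) \<le> A_norm A x * A_norm A y"
proof -
  have "(cmod (A_inner A x y))^2 \<le> Re (A_inner A x x) * Re (A_inner A y y)"
    by (rule hermitian_form_Cauchy_Schwarz)
      (rule A_inner_add_left, rule A_inner_scaleC_left, rule A_inner_commute, rule A_inner_self_nonneg)
  also have "\<dots> = (A_norm A x * A_norm A y)^2" by (simp add: A_norm_square power_mult_distrib)
  finally show ?thesis by (rule power2_le_imp_le) (simp add: A_norm_nonneg)
qed

lemma A_norm_eq_0_imp: "A_norm A x = 0 \<Longrightarrow> A x = 0"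
  using A_inner_Cauchy_Schwarz[of x "A x"] cinner_self_eq_zero[of "A x"] by (simp add: A_inner_def)

lemma A_norm_scaleC: "A_norm A (scaleC c x) = cmod c * A_norm A x"
proof -
  have "A_inner A (scaleC c x) (scaleC c x) = of_real ((cmod c * A_norm A x)^2)"
    unfolding A_inner_scaleC_left A_inner_scaleC_right A_inner_self_eq[of x]
    by (simp add: power_mult_distrib mult.commute[of "cnj c"] flip: complex_norm_square)
  hence "(A_norm A (scaleC c x))^2 = (cmod c * A_norm A x)^2"
    using A_norm_square[of "scaleC c x"] by (simp del: of_real_power)
  thus ?thesis using A_norm_nonneg by (simp add: power2_eq_iff_nonneg)
qed

lemma A_norm_normalize: "A_norm A x \<noteq> 0 \<Longrightarrow> A_norm A (scaleC (of_real (1 / A_norm A x)) x) = 1"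
  using A_norm_nonneg[of x] by (simp add: A_norm_scaleC norm_divide)

lemma A_norm_le_norm: "\<exists>K\<ge>0. \<forall>z. A_norm A z \<le> K * norm z"
proof -
  obtain K where K: "K > 0" "\<And>x. norm (A x) \<le> K * norm x"
    using bounded_op_norm_le positive unfolding positive_op_def by blast
  have "A_norm A z \<le> sqrt K * norm z" for z
  proof -
    have "(A_norm A z)^2 \<le> cmod (cinner (A z) z)" by (simp add: A_norm_square A_inner_def complex_Re_le_cmod)
    also have "\<dots> \<le> norm (A z) * norm z" by (rule cinner_Cauchy_Schwarz)
    also have "\<dots> \<le> K * norm z * norm z" by (rule mult_right_mono[OF K(2)]) simp
    also have "\<dots> = (sqrt K * norm z)^2" using K(1) by (simp add: power2_eq_square)
    finally show ?thesis by (rule power2_le_imp_le) (use K(1) in simp)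
  qed
  thus ?thesis using K(1) by (intro exI[of _ "sqrt K"]) auto
qed

lemma A_adjoint_swap:
  assumes "\<And>x y. A_inner A (T x) y = A_inner A x (W y)"
  shows "A_inner A (W x) y = A_inner A x (T y)"
  using assms[of y x] A_inner_commute[of "W x" y] A_inner_commute[of x "T y"] by simp

lemma A_norm_square_le_adjoint:
  assumes adj: "\<And>x y. A_inner A (T x) y = A_inner A x (W y)"
  shows "(A_norm A (T x))^2 \<le> A_norm A x * A_norm A (W (T x))"
proof -
  have "(A_norm A (T x))^2 = Re (A_inner A x (W (T x)))" by (simp add: A_norm_square adj)
  also have "\<dots> \<le> cmod (A_inner A x (W (T x)))" by (rule complex_Re_le_cmod)
  also have "\<dots> \<le> A_norm A x * A_norm A (W (T x))" by (rule A_inner_Cauchy_Schwarz)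
  finally show ?thesis .
qed

text \<open>For \<open>U\<close> selfadjoint with respect to the \<open>A\<close>-semi-inner product,
  \<open>k \<mapsto> \<parallel>U\<^sup>k z\<parallel>\<^sub>A\<close> is log-convex by Cauchy--Schwarz, and it grows at most like
  \<open>M\<^sup>k\<close> because \<open>A\<close> is bounded; so its successive ratios are at most \<open>M\<close>.\<close>

lemma A_selfadjoint_A_norm_le:
  assumes M: "M > 0" and bound: "\<And>x. norm (U x) \<le> M * norm x"
    and selfadjoint: "\<And>x y. A_inner A (U x) y = A_inner A x (U y)"
  shows "A_norm A (U z) \<le> M * A_norm A z"
proof -
  obtain K where K: "K \<ge> 0" "\<And>z. A_norm A z \<le> K * norm z" using A_norm_le_norm by blast
  have iterate: "norm ((U ^^ n) z) \<le> M^n * norm z" for n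
  proof (induction n)
    case (Suc n)
    have "norm ((U ^^ Suc n) z) \<le> M * norm ((U ^^ n) z)" using bound by simp
    also have "\<dots> \<le> M * (M^n * norm z)" using Suc.IH M by simp
    finally show ?case by simp
  qed simp
  let ?b = "\<lambda>k. A_norm A ((U ^^ k) z)"
  have "?b 1 \<le> M * ?b 0"
  proof (rule log_convex_seq_ratio_le_growth[where C = "K * norm z"])
    show "(?b (Suc k))^2 \<le> ?b k * ?b (Suc (Suc k))" for k
      using A_norm_square_le_adjoint[OF selfadjoint, of "(U ^^ k) z"] by simp
    show "?b n \<le> K * norm z * M^n" for n
      using order_trans[OF K(2) mult_left_mono[OF iterate K(1)]] by (simp add: algebra_simps)
  qed (use M A_norm_nonneg in auto)
  thus ?thesis by simp
qed

lemma has_A_adjoint_A_bounded: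
  assumes "has_A_adjoint A T"
  shows "\<exists>C\<ge>0. \<forall>x. A_norm A (T x) \<le> C * A_norm A x"
proof -
  obtain W where "bounded_op T" "bounded_op W" and adj: "\<And>x y. A_inner A (T x) y = A_inner A x (W y)"
    using assms unfolding has_A_adjoint_def by blast
  then obtain MT MW where MT: "MT > 0" "\<And>x. norm (T x) \<le> MT * norm x"
    and MW: "MW > 0" "\<And>x. norm (W x) \<le> MW * norm x"
    using bounded_op_norm_le by meson
  define M where "M = MW * MT"
  have M: "M > 0" using MT MW by (simp add: M_def)
  have "norm ((W \<circ> T) x) \<le> M * norm x" for x
    using MW(2)[of "T x"] mult_left_mono[OF MT(2)[of x] less_imp_le[OF MW(1)]] by (simp add: M_def mult.assoc)
  moreover have "A_inner A ((W \<circ> T) x) y = A_inner A x ((W \<circ> T) y)" for x y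
    by (simp add: A_adjoint_swap[OF adj] adj)
  ultimately have WT: "A_norm A (W (T x)) \<le> M * A_norm A x" for x
    using A_selfadjoint_A_norm_le[OF M, of "W \<circ> T"] by simp
  have "A_norm A (T x) \<le> sqrt M * A_norm A x" for x
  proof -
    have "(A_norm A (T x))^2 \<le> A_norm A x * A_norm A (W (T x))" by (rule A_norm_square_le_adjoint[OF adj])
    also have "\<dots> \<le> A_norm A x * (M * A_norm A x)" by (rule mult_left_mono[OF WT A_norm_nonneg])
    also have "\<dots> = (sqrt M * A_norm A x)^2" using M by (simp add: power2_eq_square)
    finally show ?thesis by (rule power2_le_imp_le) (use M A_norm_nonneg in simp)
  qed
  thus ?thesis using M by (intro exI[of _ "sqrt M"]) auto
qed

lemma exists_A_unit:
  assumes "range_dim_ge_2 A"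
  shows "\<exists>u. A_norm A u = 1"
proof -
  obtain x where "\<forall>c. A x \<noteq> scaleC c 0" using range_dim_ge_2_non_multiple[OF assms] by blast
  hence "A_norm A x \<noteq> 0" using A_norm_eq_0_imp by (auto simp: scaleC_zero_right)
  thus ?thesis using A_norm_normalize by blast
qed

lemma exists_A_orthogonal_unit:
  assumes "range_dim_ge_2 A" and u: "A_norm A u = 1"
  shows "\<exists>z. A_norm A z = 1 \<and> A_inner A u z = 0 \<and> A_inner A z u = 0"
proof -
  obtain a where a: "\<And>c. A a \<noteq> scaleC c (A u)" using range_dim_ge_2_non_multiple[OF assms(1)] by blast
  define w where "w = a - scaleC (A_inner A a u) u"
  have "A w \<noteq> 0"
    using a[of "A_inner A a u"] by (simp add: w_def clinear_op_diff[OF clinear] clinear_op_scaleC[OF clinear])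
  hence w: "A_norm A w \<noteq> 0" using A_norm_eq_0_imp by blast
  have "A_inner A w u = 0"
    using u by (simp add: w_def A_inner_diff_left A_inner_scaleC_left A_inner_self_eq)
  define z where "z = scaleC (of_real (1 / A_norm A w)) w"
  have "A_norm A z = 1" unfolding z_def by (rule A_norm_normalize[OF w])
  moreover have "A_inner A z u = 0" unfolding z_def by (simp add: A_inner_scaleC_left \<open>A_inner A w u = 0\<close>)
  moreover have "A_inner A u z = 0" using A_inner_commute[of z u] calculation(2) by simp
  ultimately show ?thesis by blast
qed

lemma A_unit_with_A_inner_eq:
  assumes u: "A_norm A u = 1" and z: "A_norm A z = 1"
    and uz: "A_inner A u z = 0" and zu: "A_inner A z u = 0" and e: "e^2 = 1 - (cmod q)^2"
  defines "y \<equiv> scaleC (cnj q) u + scaleC (of_real e) z"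
  shows "A_norm A y = 1" and "A_inner A u y = q"
proof -
  have "A_inner A y y = cnj q * q + of_real e * of_real e"
    using u z by (simp add: y_def A_inner_add_left A_inner_add_right A_inner_scaleC_left
        A_inner_scaleC_right A_inner_self_eq[of u] A_inner_self_eq[of z] uz zu)
  also have "\<dots> = of_real ((cmod q)^2 + e^2)"
    by (simp add: power2_eq_square mult.commute[of "cnj q"] flip: complex_norm_square)
  finally have "(A_norm A y)^2 = 1" using e by (simp add: A_norm_square)
  thus "A_norm A y = 1" using A_norm_nonneg[of y] by (simp add: power2_eq_1_iff)
  show "A_inner A u y = q"
    using u by (simp add: y_def A_inner_add_right A_inner_scaleC_right A_inner_self_eq[of u] uz)
qed

end

definition A_q_values :: "('a::complex_inner \<Rightarrow> 'a) \<Rightarrow> complex \<Rightarrow> ('a \<Rightarrow> 'a) \<Rightarrow> real set" where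
  "A_q_values A q T = {cmod (A_inner A (T x) y) | x y.
      A_norm A x = 1 \<and> A_norm A y = 1 \<and> A_inner A x y = q}"

lemma A_q_numrad_eq_Sup: "A_q_numrad A q T = Sup (A_q_values A q T)"
  unfolding A_q_numrad_def A_q_values_def by simp

lemma A_q_numrad_ge:
  assumes "bdd_above (A_q_values A q T)" and "A_norm A x = 1" "A_norm A y = 1" "A_inner A x y = q"
  shows "cmod (A_inner A (T x) y) \<le> A_q_numrad A q T"
  unfolding A_q_numrad_eq_Sup
  by (rule cSup_upper[OF _ assms(1)]) (use assms(2-) in \<open>auto simp: A_q_values_def\<close>)

lemma (in A_positive) bdd_above_A_q_values:
  assumes "has_A_adjoint A T"
  shows "bdd_above (A_q_values A q T)"
proof -
  obtain C where C: "\<And>x. A_norm A (T x) \<le> C * A_norm A x" using has_A_adjoint_A_bounded[OF assms] by blast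
  have "r \<le> C" if r: "r \<in> A_q_values A q T" for r
  proof -
    obtain x y where "r = cmod (A_inner A (T x) y)" "A_norm A x = 1" "A_norm A y = 1"
      using r unfolding A_q_values_def by blast
    thus "r \<le> C" using A_inner_Cauchy_Schwarz[of "T x" y] C[of x] by simp
  qed
  thus ?thesis by (rule bdd_aboveI)
qed

locale A_q_radius = A_positive +
  fixes q :: complex
  assumes range_dim: "range_dim_ge_2 A" and q_le_1: "cmod q \<le> 1"
begin

lemma A_q_values_nonempty: "A_q_values A q T \<noteq> {}"
proof -
  obtain u where u: "A_norm A u = 1" using exists_A_unit[OF range_dim] by blast
  obtain z where "A_norm A z = 1" "A_inner A u z = 0" "A_inner A z u = 0"
    using exists_A_orthogonal_unit[OF range_dim u] by blast
  moreover have "(sqrt (1 - (cmod q)^2))^2 = 1 - (cmod q)^2" using q_le_1 by (simp add: power_le_one)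
  ultimately show ?thesis
    using u A_unit_with_A_inner_eq[of u z "sqrt (1 - (cmod q)^2)" q] unfolding A_q_values_def by blast
qed

lemma A_q_numrad_le:
  assumes "\<And>x y. A_norm A x = 1 \<Longrightarrow> A_norm A y = 1 \<Longrightarrow> A_inner A x y = q
      \<Longrightarrow> cmod (A_inner A (T x) y) \<le> c"
  shows "A_q_numrad A q T \<le> c"
  unfolding A_q_numrad_eq_Sup
  by (rule cSup_least[OF A_q_values_nonempty]) (auto simp: A_q_values_def assms)

lemma A_q_numrad_diag_unit:
  assumes bdd: "bdd_above (A_q_values A q T)" and u: "A_norm A u = 1"
  shows "cmod q * cmod (A_inner A (T u) u) \<le> A_q_numrad A q T"
proof -
  obtain z where z: "A_norm A z = 1" "A_inner A u z = 0" "A_inner A z u = 0"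
    using exists_A_orthogonal_unit[OF range_dim u] by blast
  define d where "d = sqrt (1 - (cmod q)^2)"
  have "(cmod q)^2 \<le> 1" using q_le_1 by (simp add: power_le_one)
  hence d: "d^2 = 1 - (cmod q)^2" "(- d)^2 = 1 - (cmod q)^2" by (simp_all add: d_def)
  define a where "a = A_inner A (T u) u"
  define b where "b = A_inner A (T u) z"
  have value_le: "cmod (q * a + of_real e * b) \<le> A_q_numrad A q T" if e: "e^2 = 1 - (cmod q)^2" for e
  proof -
    define y where "y = scaleC (cnj q) u + scaleC (of_real e) z"
    have y: "A_norm A y = 1" "A_inner A u y = q"
      using A_unit_with_A_inner_eq[OF u z e] by (simp_all add: y_def)
    have "A_inner A (T u) y = q * a + of_real e * b"
      by (simp add: y_def A_inner_add_right A_inner_scaleC_right a_def b_def)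
    thus ?thesis using A_q_numrad_ge[OF bdd u y] by simp
  qed
  have "2 * cmod (q * a) = cmod ((q * a + of_real d * b) + (q * a + of_real (- d) * b))"
    by (simp add: norm_mult)
  also have "\<dots> \<le> cmod (q * a + of_real d * b) + cmod (q * a + of_real (- d) * b)"
    by (rule norm_triangle_ineq)
  also have "\<dots> \<le> 2 * A_q_numrad A q T" using value_le[OF d(1)] value_le[OF d(2)] by simp
  finally show ?thesis by (simp add: a_def norm_mult)
qed

lemma A_q_numrad_nonneg:
  assumes "bdd_above (A_q_values A q T)"
  shows "0 \<le> A_q_numrad A q T"
proof -
  obtain u where "A_norm A u = 1" using exists_A_unit[OF range_dim] by blast
  thus ?thesis using A_q_numrad_diag_unit[OF assms] by (meson mult_nonneg_nonneg norm_ge_zero order_trans)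
qed

lemma A_q_numrad_diag:
  assumes "clinear_op T" and bdd: "bdd_above (A_q_values A q T)"
  shows "cmod q * cmod (A_inner A (T v) v) \<le> A_q_numrad A q T * (A_norm A v)^2"
proof (cases "A_norm A v = 0")
  case True
  hence "A_inner A (T v) v = 0"
    using A_norm_eq_0_imp by (simp add: A_inner_def positive_op_selfadjoint[OF positive] cinner_zero_right)
  thus ?thesis using True by simp
next
  case False
  define n where "n = A_norm A v"
  have n: "n > 0" using False A_norm_nonneg[of v] by (simp add: n_def)
  define u where "u = scaleC (of_real (1 / n)) v"
  have u: "A_norm A u = 1" unfolding u_def n_def by (rule A_norm_normalize[OF False])
  have "A_inner A (T u) u = of_real (1 / n) * of_real (1 / n) * A_inner A (T v) v"
    by (simp add: u_def clinear_op_scaleC[OF assms(1)] A_inner_scaleC_left A_inner_scaleC_right)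
  hence "A_inner A (T v) v = of_real (n^2) * A_inner A (T u) u"
    using n by (simp add: field_simps power2_eq_square)
  hence "cmod q * cmod (A_inner A (T v) v) = n^2 * (cmod q * cmod (A_inner A (T u) u))"
    by (simp add: norm_mult norm_power)
  also have "\<dots> \<le> n^2 * A_q_numrad A q T"
    by (rule mult_left_mono[OF A_q_numrad_diag_unit[OF bdd u]]) simp
  finally show ?thesis by (simp add: n_def mult.commute)
qed

lemma A_q_numrad_polarization:
  assumes lin: "clinear_op T" and bdd: "bdd_above (A_q_values A q T)"
  shows "cmod q * cmod (A_inner A (T u) v) \<le> A_q_numrad A q T * ((A_norm A u)^2 + (A_norm A v)^2)"
proof -
  let ?w = "A_q_numrad A q T"
  define P where "P c = A_inner A (T (u + scaleC c v)) (u + scaleC c v)" for c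
  define N where "N c = (A_norm A (u + scaleC c v))^2" for c
  have PN: "cmod q * cmod (P c) \<le> ?w * N c" for c
    unfolding P_def N_def by (rule A_q_numrad_diag[OF lin bdd])
  have polarization: "4 * A_inner A (T u) v = P 1 - P (-1) + \<i> * P \<i> - \<i> * P (- \<i>)"
    by (simp add: P_def clinear_op_add[OF lin] clinear_op_scaleC[OF lin] A_inner_add_left
        A_inner_add_right A_inner_scaleC_left A_inner_scaleC_right algebra_simps)
  have N_sum: "N 1 + N (-1) + N \<i> + N (- \<i>) = 4 * ((A_norm A u)^2 + (A_norm A v)^2)"
    by (simp add: N_def A_norm_square A_inner_add_left A_inner_add_right A_inner_scaleC_left
        A_inner_scaleC_right algebra_simps)
  have "4 * (cmod q * cmod (A_inner A (T u) v)) = cmod q * cmod (P 1 - P (-1) + \<i> * P \<i> - \<i> * P (- \<i>))"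
    using arg_cong[OF polarization, of cmod] by (simp add: norm_mult)
  also have "\<dots> \<le> cmod q * (cmod (P 1) + cmod (P (-1)) + cmod (P \<i>) + cmod (P (- \<i>)))"
    using norm_triangle_ineq4[of "P 1 - P (-1) + \<i> * P \<i>" "\<i> * P (- \<i>)"]
      norm_triangle_ineq[of "P 1 - P (-1)" "\<i> * P \<i>"] norm_triangle_ineq4[of "P 1" "P (-1)"]
    by (intro mult_left_mono) (simp_all add: norm_mult)
  also have "\<dots> \<le> ?w * (N 1 + N (-1) + N \<i> + N (- \<i>))"
    using PN[of 1] PN[of "-1"] PN[of \<i>] PN[of "- \<i>"] by (simp add: algebra_simps)
  also have "\<dots> = 4 * (?w * ((A_norm A u)^2 + (A_norm A v)^2))" by (simp add: N_sum)
  finally show ?thesis by simp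
qed

lemma A_q_numrad_A_inner_le:
  assumes "has_A_adjoint A T"
  shows "cmod q * cmod (A_inner A (T u) v) \<le> 2 * A_q_numrad A q T * A_norm A u * A_norm A v"
proof (cases "A_norm A u = 0 \<or> A_norm A v = 0")
  case True
  obtain W where adj: "\<And>x y. A_inner A (T x) y = A_inner A x (W y)"
    using assms unfolding has_A_adjoint_def by blast
  from True have "A u = 0 \<or> A v = 0" using A_norm_eq_0_imp by blast
  hence "A_inner A (T u) v = 0"
  proof
    assume "A u = 0"
    thus ?thesis using adj[of u v] by (simp add: A_inner_def cinner_zero_left)
  next
    assume "A v = 0"
    thus ?thesis by (simp add: A_inner_def positive_op_selfadjoint[OF positive] cinner_zero_right)
  qed
  thus ?thesis using True by auto
next
  case False
  define t where "t = sqrt (A_norm A v / A_norm A u)"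
  have t: "t > 0" "t^2 * A_norm A u = A_norm A v"
    using False A_norm_nonneg[of u] A_norm_nonneg[of v] by (auto simp: t_def)
  have lin: "clinear_op T" using assms unfolding has_A_adjoint_def by (blast intro: bounded_op_clinear)
  \<comment> \<open>rescaling \<open>u, v\<close> by \<open>t, 1/t\<close> turns the sum of squares into twice the product\<close>
  have "A_inner A (T (scaleC (of_real t) u)) (scaleC (of_real (1 / t)) v) = A_inner A (T u) v"
    using t(1) by (simp add: clinear_op_scaleC[OF lin] A_inner_scaleC_left A_inner_scaleC_right)
  moreover have "(A_norm A (scaleC (of_real t) u))^2 + (A_norm A (scaleC (of_real (1 / t)) v))^2
      = 2 * A_norm A u * A_norm A v"
    using t False by (simp add: A_norm_scaleC norm_divide t(2)[symmetric] field_simps power2_eq_square)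
  ultimately show ?thesis
    using A_q_numrad_polarization[OF lin bdd_above_A_q_values[OF assms],
        of "scaleC (of_real t) u" "scaleC (of_real (1 / t)) v"]
    by (simp add: mult.assoc)
qed

lemma A_q_numrad_A_norm_image_le:
  assumes "has_A_adjoint A S"
  shows "cmod q * A_norm A (S x) \<le> 2 * A_q_numrad A q S * A_norm A x"
proof (cases "A_norm A (S x) = 0")
  case True
  thus ?thesis
    using A_q_numrad_nonneg[OF bdd_above_A_q_values[OF assms]] A_norm_nonneg[of x] by simp
next
  case False
  have "cmod q * A_norm A (S x) * A_norm A (S x) = cmod q * cmod (A_inner A (S x) (S x))"
    by (simp add: A_inner_self_eq[of "S x"] power2_eq_square norm_mult abs_of_nonneg[OF A_norm_nonneg])
  also have "\<dots> \<le> 2 * A_q_numrad A q S * A_norm A x * A_norm A (S x)"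
    by (rule A_q_numrad_A_inner_le[OF assms])
  finally show ?thesis using False A_norm_nonneg[of "S x"] by simp
qed

lemma A_q_numrad_comp_A_inner_le:
  assumes T: "has_A_adjoint A T" and S: "has_A_adjoint A S"
    and x: "A_norm A x = 1" and y: "A_norm A y = 1"
  shows "(cmod q)^2 * cmod (A_inner A (T (S x)) y) \<le> 4 * A_q_numrad A q T * A_q_numrad A q S"
proof -
  have wT: "0 \<le> A_q_numrad A q T" by (rule A_q_numrad_nonneg[OF bdd_above_A_q_values[OF T]])
  have "(cmod q)^2 * cmod (A_inner A (T (S x)) y) = cmod q * (cmod q * cmod (A_inner A (T (S x)) y))"
    by (simp add: power2_eq_square)
  also have "\<dots> \<le> cmod q * (2 * A_q_numrad A q T * A_norm A (S x))"
    using A_q_numrad_A_inner_le[OF T, of "S x" y] y by (simp add: mult_left_mono)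
  also have "\<dots> = 2 * A_q_numrad A q T * (cmod q * A_norm A (S x))" by (simp add: algebra_simps)
  also have "\<dots> \<le> 2 * A_q_numrad A q T * (2 * A_q_numrad A q S)"
    by (rule mult_left_mono[OF A_q_numrad_A_norm_image_le[OF S, of x, unfolded x mult_1_right]])
      (use wT in simp)
  finally show ?thesis by simp
qed

end

theorem mainTheorem4:
  fixes A T S :: "'a::chilbert_space \<Rightarrow> 'a" and q :: complex
  assumes "positive_op A"
    and "range_dim_ge_2 A"
    and "has_A_adjoint A T"
    and "has_A_adjoint A S"
    and "0 < cmod q" and "cmod q \<le> 1"
  shows "(cmod q)^2 * A_q_numrad A q (T \<circ> S) \<le> 4 * A_q_numrad A q T * A_q_numrad A q S"
proof -
  interpret A_q_radius A q
    using assms(1,2,6) by (simp add: A_q_radius_def A_q_radius_axioms_def A_positive_def)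
  have "A_q_numrad A q (T \<circ> S) \<le> 4 * A_q_numrad A q T * A_q_numrad A q S / (cmod q)^2"
    using A_q_numrad_comp_A_inner_le[OF assms(3,4)] assms(5)
    by (intro A_q_numrad_le) (simp add: field_simps)
  thus ?thesis using assms(5) by (simp add: field_simps)
qed

end
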